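(* Let $G=(V,E)$ be a finite simple graph on $n$ vertices with no isolated vertex. Let $G'$ be any graph with vertex set $V$ obtained as follows: for each vertex $v\in V$, if $\deg_G(v)\ge 2$, choose two distinct neighbors $u,w$ of $v$ in $G$ (arbitrarily) and put the edge $uw$ into $G'$; if $\deg_G(v)=1$, put a loop on the unique neighbor of $v$ into $G'$ (an edge already present is not duplicated). Then $$\gamma_t(G)\le n-\alpha(G')=\beta(G').$$
   Context: A set $S\subseteq V$ is a total dominating set of $G$ if every vertex $v\in V$ has a neighbor in $S$; $\gamma_t(G)$ is the minimum size of a total dominating set of $G$. For a graph $H$ possibly with loops, an independent set is a set of vertices containing no two endpoints of an edge and no vertex carrying a loop, and $\alpha(H)$ is the maximum size of an independent set; a vertex cover is a set of vertices meeting every edge (so it contains every vertex carrying a loop), and $\beta(H)$ is the minimum size of a vertex cover. *)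

theory Defs
  imports Main
begin

definition simple_graph :: "'a set \<Rightarrow> ('a \<Rightarrow> 'a \<Rightarrow> bool) \<Rightarrow> bool" where
  "simple_graph V E \<longleftrightarrow> finite V \<and> (\<forall>u v. E u v \<longrightarrow> u \<in> V \<and> v \<in> V)
     \<and> (\<forall>u v. E u v \<longrightarrow> E v u) \<and> (\<forall>v. \<not> E v v)"

definition neighbors :: "'a set \<Rightarrow> ('a \<Rightarrow> 'a \<Rightarrow> bool) \<Rightarrow> 'a \<Rightarrow> 'a set" where
  "neighbors V E v = {u \<in> V. E v u}"

definition degree :: "'a set \<Rightarrow> ('a \<Rightarrow> 'a \<Rightarrow> bool) \<Rightarrow> 'a \<Rightarrow> nat" where
  "degree V E v = card (neighbors V E v)"

definition total_dominating_set :: "'a set \<Rightarrow> ('a \<Rightarrow> 'a \<Rightarrow> bool) \<Rightarrow> 'a set \<Rightarrow> bool" where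
  "total_dominating_set V E S \<longleftrightarrow> S \<subseteq> V \<and> (\<forall>v\<in>V. \<exists>u\<in>S. E v u)"

definition gamma_t :: "'a set \<Rightarrow> ('a \<Rightarrow> 'a \<Rightarrow> bool) \<Rightarrow> nat" where
  "gamma_t V E = Min {card S | S. total_dominating_set V E S}"

(* Graphs possibly with loops: vertex set V and a set F of edges, each edge being
   a set {u,w} (a loop on u is the singleton {u}). *)
definition independent_set :: "'a set \<Rightarrow> 'a set set \<Rightarrow> 'a set \<Rightarrow> bool" where
  "independent_set V F S \<longleftrightarrow> S \<subseteq> V \<and> (\<forall>e\<in>F. \<not> e \<subseteq> S)"

definition alpha :: "'a set \<Rightarrow> 'a set set \<Rightarrow> nat" where
  "alpha V F = Max {card S | S. independent_set V F S}"

definition vertex_cover :: "'a set \<Rightarrow> 'a set set \<Rightarrow> 'a set \<Rightarrow> bool" where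
  "vertex_cover V F C \<longleftrightarrow> C \<subseteq> V \<and> (\<forall>e\<in>F. e \<inter> C \<noteq> {})"

definition beta :: "'a set \<Rightarrow> 'a set set \<Rightarrow> nat" where
  "beta V F = Min {card C | C. vertex_cover V F C}"

end

theory Submission
  imports Defs
begin

(* Every vertex v chooses neighbours of v, so a vertex cover of G' contains a neighbour of
   every vertex, i.e. it is a total dominating set of G: hence gamma_t(G) <= beta(G').
   The equality n - alpha(G') = beta(G') is Gallai's identity: complements of independent
   sets are exactly the vertex covers. *)

lemma finite_card_set_of_subsets:
  assumes "finite V" and "\<And>S. P S \<Longrightarrow> S \<subseteq> V"
  shows "finite {card S | S. P S}"
proof (rule finite_subset)
  show "{card S | S. P S} \<subseteq> {..card V}"
    using assms card_mono by fastforce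
qed simp

lemma gamma_t_le_card:
  assumes "finite V" and "total_dominating_set V E S"
  shows "gamma_t V E \<le> card S"
  unfolding gamma_t_def
proof (rule Min_le)
  show "finite {card S | S. total_dominating_set V E S}"
    by (rule finite_card_set_of_subsets[OF assms(1)]) (simp add: total_dominating_set_def)
qed (use assms(2) in blast)

lemma card_le_alpha:
  assumes "finite V" and "independent_set V F S"
  shows "card S \<le> alpha V F"
  unfolding alpha_def
proof (rule Max_ge)
  show "finite {card S | S. independent_set V F S}"
    by (rule finite_card_set_of_subsets[OF assms(1)]) (simp add: independent_set_def)
qed (use assms(2) in blast)

lemma beta_le_card:
  assumes "finite V" and "vertex_cover V F C"
  shows "beta V F \<le> card C"
  unfolding beta_def
proof (rule Min_le)
  show "finite {card C | C. vertex_cover V F C}"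
    by (rule finite_card_set_of_subsets[OF assms(1)]) (simp add: vertex_cover_def)
qed (use assms(2) in blast)

lemma alpha_attained:
  assumes "finite V" and "{} \<notin> F"
  obtains S where "independent_set V F S" and "card S = alpha V F"
proof -
  have "independent_set V F {}"
    using assms(2) by (auto simp: independent_set_def)
  then have "{card S | S. independent_set V F S} \<noteq> {}"
    by blast
  moreover have "finite {card S | S. independent_set V F S}"
    by (rule finite_card_set_of_subsets[OF assms(1)]) (simp add: independent_set_def)
  ultimately have "alpha V F \<in> {card S | S. independent_set V F S}"
    unfolding alpha_def by (intro Max_in)
  then show ?thesis using that by auto
qed

lemma beta_attained:
  assumes "finite V" and "\<forall>e\<in>F. e \<noteq> {} \<and> e \<subseteq> V"
  obtains C where "vertex_cover V F C" and "card C = beta V F"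
proof -
  have "vertex_cover V F V"
    using assms(2) by (auto simp: vertex_cover_def)
  then have "{card C | C. vertex_cover V F C} \<noteq> {}"
    by blast
  moreover have "finite {card C | C. vertex_cover V F C}"
    by (rule finite_card_set_of_subsets[OF assms(1)]) (simp add: vertex_cover_def)
  ultimately have "beta V F \<in> {card C | C. vertex_cover V F C}"
    unfolding beta_def by (intro Min_in)
  then show ?thesis using that by auto
qed

lemma vertex_cover_Diff_independent_set:
  assumes "\<forall>e\<in>F. e \<subseteq> V" and "independent_set V F S"
  shows "vertex_cover V F (V - S)"
  using assms unfolding vertex_cover_def independent_set_def by blast

lemma independent_set_Diff_vertex_cover:
  assumes "\<forall>e\<in>F. e \<subseteq> V" and "vertex_cover V F C"
  shows "independent_set V F (V - C)"
  using assms unfolding vertex_cover_def independent_set_def by blast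

lemma alpha_plus_beta:
  assumes "finite V" and edges: "\<forall>e\<in>F. e \<noteq> {} \<and> e \<subseteq> V"
  shows "alpha V F + beta V F = card V"
proof -
  from edges have edges_sub: "\<forall>e\<in>F. e \<subseteq> V" by blast
  obtain S where S: "independent_set V F S" "card S = alpha V F"
    using alpha_attained assms by blast
  obtain C where C: "vertex_cover V F C" "card C = beta V F"
    using beta_attained assms by blast
  have "S \<subseteq> V" "C \<subseteq> V"
    using S(1) C(1) unfolding independent_set_def vertex_cover_def by blast+
  have "beta V F \<le> card (V - S)"
    using beta_le_card[OF assms(1) vertex_cover_Diff_independent_set[OF edges_sub S(1)]] .
  also have "\<dots> = card V - alpha V F"
    using card_Diff_subset[OF finite_subset[OF \<open>S \<subseteq> V\<close> assms(1)] \<open>S \<subseteq> V\<close>] S(2) by simp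
  finally have "beta V F \<le> card V - alpha V F" .
  moreover have "card V - beta V F \<le> alpha V F"
    using card_le_alpha[OF assms(1) independent_set_Diff_vertex_cover[OF edges_sub C(1)]]
      card_Diff_subset[OF finite_subset[OF \<open>C \<subseteq> V\<close> assms(1)] \<open>C \<subseteq> V\<close>] C(2) by simp
  moreover have "alpha V F \<le> card V"
    using card_mono[OF assms(1) \<open>S \<subseteq> V\<close>] S(2) by simp
  ultimately show ?thesis by linarith
qed

lemma vertex_cover_of_neighbour_choices_is_total_dominating:
  assumes "\<forall>v\<in>V. g v \<subseteq> {u. E v u}" and "vertex_cover V (g ` V) C"
  shows "total_dominating_set V E C"
  using assms unfolding vertex_cover_def total_dominating_set_def by blast

lemma degree_pos:
  assumes "simple_graph V E" and "E v u"
  shows "0 < degree V E v"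
proof -
  have "u \<in> neighbors V E v" "finite (neighbors V E v)"
    using assms by (auto simp: simple_graph_def neighbors_def)
  then show ?thesis
    unfolding degree_def by (auto simp: card_gt_0_iff)
qed

theorem lemma2p1:
  fixes V :: "'a set" and E :: "'a \<Rightarrow> 'a \<Rightarrow> bool" and f :: "'a \<Rightarrow> 'a \<times> 'a"
  assumes "simple_graph V E"
    and "\<forall>v\<in>V. \<exists>u. E v u"
    and "\<forall>v\<in>V. degree V E v \<ge> 2 \<longrightarrow>
           fst (f v) \<noteq> snd (f v) \<and> E v (fst (f v)) \<and> E v (snd (f v))"
    and "\<forall>v\<in>V. degree V E v = 1 \<longrightarrow> E v (fst (f v)) \<and> snd (f v) = fst (f v)"
  shows "gamma_t V E \<le> card V - alpha V ((\<lambda>v. {fst (f v), snd (f v)}) ` V)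
       \<and> card V - alpha V ((\<lambda>v. {fst (f v), snd (f v)}) ` V) = beta V ((\<lambda>v. {fst (f v), snd (f v)}) ` V)"
proof -
  define g where "g v = {fst (f v), snd (f v)}" for v
  have "finite V" and E_in_V: "\<And>u v. E u v \<Longrightarrow> u \<in> V \<and> v \<in> V"
    using assms(1) by (auto simp: simple_graph_def)
  have choices: "\<forall>v\<in>V. g v \<subseteq> {u. E v u}"
  proof
    fix v assume "v \<in> V"
    with assms(2) degree_pos[OF assms(1)] have "0 < degree V E v" by blast
    then have "degree V E v \<ge> 2 \<or> degree V E v = 1" by linarith
    with assms(3,4) \<open>v \<in> V\<close> show "g v \<subseteq> {u. E v u}" by (auto simp: g_def)
  qed
  then have edges: "\<forall>e\<in>g ` V. e \<noteq> {} \<and> e \<subseteq> V"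
    using E_in_V unfolding g_def by blast
  obtain C where C: "vertex_cover V (g ` V) C" "card C = beta V (g ` V)"
    using beta_attained[OF \<open>finite V\<close> edges] by blast
  have "total_dominating_set V E C"
    using vertex_cover_of_neighbour_choices_is_total_dominating[OF choices C(1)] .
  then have "gamma_t V E \<le> beta V (g ` V)"
    using gamma_t_le_card[OF \<open>finite V\<close>] C(2) by metis
  moreover have "card V - alpha V (g ` V) = beta V (g ` V)"
    using alpha_plus_beta[OF \<open>finite V\<close> edges] by linarith
  ultimately show ?thesis unfolding g_def by simp
qed

end
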